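(* Consider the system $$\dot x=-y+x(x^3+xy^2)+\sum_{k=1}^2\varepsilon^k\Big(\lambda_kx+\sum_{i+j=4}a_{k,i,j}x^iy^j\Big),\qquad \dot y=x+y(x^3+xy^2)+\sum_{k=1}^2\varepsilon^k\Big(\lambda_ky+\sum_{i+j=4}b_{k,i,j}x^iy^j\Big)$$ with real coefficients. For $|\varepsilon|>0$ sufficiently small: (1) the first order averaging method yields at most three limit cycles bifurcating from the periodic orbits of the unperturbed system (the center at the origin of $\dot x=-y+x(x^3+xy^2)$, $\dot y=x+y(x^3+xy^2)$), and three is reached; (2) under the conditions $a_{1,1,3}=b_{1,0,4}$, $a_{1,3,1}=b_{1,2,2}$, $b_{1,4,0}=\lambda_1=0$ (so that $f_1\equiv0$) together with $a_{1,2,2}=b_{1,1,3}$, $a_{1,4,0}=b_{1,3,1}$, $a_{1,0,4}=0$, the second order averaging method yields at most three limit cycles, and three is reached. More precisely, under these conditions, with $z=\big[\frac{1-s^2}{3(1+s^2)}\big]^{1/3}$, $s\in(0,1)$, the second order averaged function equals $$\frac{\pi\,3^{2/3}(1-s)^{1/3}}{108(1+s)^{11/3}(1+s^2)^{4/3}}\big(H_1s^6+H_2s^5+H_3s^4+H_4s^3+H_3s^2+H_2s+H_1\big),$$ where $H_1=3a_{2,1,3}+a_{2,3,1}-3b_{2,0,4}-b_{2,2,2}-3b_{2,4,0}+72\lambda_2$, $H_2=-4a_{2,1,3}+4b_{2,0,4}+4a_{2,3,1}-4b_{2,2,2}-12b_{2,4,0}+288\lambda_2$, $H_3=5a_{2,1,3}-9a_{2,3,1}-5b_{2,0,4}+9b_{2,2,2}-5b_{2,4,0}+504\lambda_2$,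 $H_4=-8a_{2,1,3}+8a_{2,3,1}+8b_{2,0,4}-8b_{2,2,2}+40b_{2,4,0}+576\lambda_2$.
   Context: Averaging framework. In polar coordinates $x=r\cos\theta$, $y=r\sin\theta$ expand $dr/d\theta=F_0(\theta,r)+\varepsilon F_1(\theta,r)+\varepsilon^2F_2(\theta,r)+O(\varepsilon^3)$; here $F_0=r^4\cos\theta$. Let $r(\theta,z)=z(1-3z^3\sin\theta)^{-1/3}$ (solution of $dr/d\theta=F_0$, $r(0)=z$, $2\pi$-periodic and positive for $z\in D=(0,3^{-1/3})$) and $Y(\theta,z)=(1-3z^3\sin\theta)^{-4/3}$ (solution of $Y'=\partial_rF_0(\theta,r(\theta,z))Y$, $Y(0)=1$). Define $y_1(\theta,z)=Y(\theta,z)\int_0^\theta Y^{-1}F_1\,ds$ and $y_2(\theta,z)=Y(\theta,z)\int_0^\theta Y^{-1}\big(2F_2+\partial_r^2F_0\,y_1^2+2\partial_rF_1\,y_1\big)ds$, with $F_j$ evaluated at $(s,r(s,z))$. The averaged functions are $f_1(z)=y_1(2\pi,z)$, $f_2(z)=y_2(2\pi,z)/2$. By the averaging theorem, if $f_1\equiv\dots\equiv f_{j-1}\equiv0$ and $z^*\in D$ is a simple zero of $f_j$, then for $|\varepsilon|$ small the system has a limit cycle tending to the periodic orbit through $(z^*,0)$. "The $j$-th order averaging method yields at most $n$ limit cycles, and $n$ is reached" means that over all admissible coefficient choices with $f_1\equiv\dots\equiv f_{j-1}\equiv 0$, $f_j\not\equiv0$, the function $f_j$ has at most $n$ simple zeros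 in $D$, and some choice gives exactly $n$. *)

theory Defs
  imports "HOL-Analysis.Analysis"
begin

text \<open>Coefficients: a k i j = a_{k,i,j}, b k i j = b_{k,i,j}, lam k = lambda_k
  (only k in {1,2} and i+j=4 are used).\<close>

definition Pfield :: "(nat \<Rightarrow> nat \<Rightarrow> nat \<Rightarrow> real) \<Rightarrow> (nat \<Rightarrow> real) \<Rightarrow> real \<Rightarrow> real \<Rightarrow> real \<Rightarrow> real" where
  "Pfield a lam e x y = - y + x * (x^3 + x * y^2)
     + (\<Sum>k\<in>{1,2}. e^k * (lam k * x + (\<Sum>i\<le>4. a k i (4 - i) * x^i * y^(4 - i))))"

definition Qfield :: "(nat \<Rightarrow> nat \<Rightarrow> nat \<Rightarrow> real) \<Rightarrow> (nat \<Rightarrow> real) \<Rightarrow> real \<Rightarrow> real \<Rightarrow> real \<Rightarrow> real" where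
  "Qfield b lam e x y = x + y * (x^3 + x * y^2)
     + (\<Sum>k\<in>{1,2}. e^k * (lam k * y + (\<Sum>i\<le>4. b k i (4 - i) * x^i * y^(4 - i))))"

text \<open>dr/dtheta in polar coordinates: (dr/dt)/(dtheta/dt) = r (xP+yQ)/(xQ-yP).\<close>
definition drdtheta where
  "drdtheta a b lam e \<theta> r =
     (let x = r * cos \<theta>; y = r * sin \<theta>;
          P = Pfield a lam e x y; Q = Qfield b lam e x y
      in r * (x * P + y * Q) / (x * Q - y * P))"

definition Fc where
  "Fc a b lam j \<theta> r = ((deriv ^^ j) (\<lambda>e. drdtheta a b lam e \<theta> r) 0) / fact j"

definition rsol :: "real \<Rightarrow> real \<Rightarrow> real" where
  "rsol \<theta> z = z * (1 - 3 * z^3 * sin \<theta>) powr (-1/3)"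

definition Ysol :: "real \<Rightarrow> real \<Rightarrow> real" where
  "Ysol \<theta> z = (1 - 3 * z^3 * sin \<theta>) powr (-4/3)"

definition y1 where
  "y1 a b lam \<theta> z = Ysol \<theta> z *
     integral {0..\<theta>} (\<lambda>s. Fc a b lam 1 s (rsol s z) / Ysol s z)"

definition y2 where
  "y2 a b lam \<theta> z = Ysol \<theta> z *
     integral {0..\<theta>} (\<lambda>s.
        (2 * Fc a b lam 2 s (rsol s z)
         + deriv (deriv (\<lambda>\<rho>. Fc a b lam 0 s \<rho>)) (rsol s z) * (y1 a b lam s z)^2
         + 2 * deriv (\<lambda>\<rho>. Fc a b lam 1 s \<rho>) (rsol s z) * y1 a b lam s z) / Ysol s z)"

definition f1 where "f1 a b lam z = y1 a b lam (2 * pi) z"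
definition f2 where "f2 a b lam z = y2 a b lam (2 * pi) z / 2"

definition Dom :: "real set" where "Dom = {0<..<3 powr (-1/3)}"

definition simple_zero :: "(real \<Rightarrow> real) \<Rightarrow> real \<Rightarrow> bool" where
  "simple_zero f z \<longleftrightarrow> f z = 0 \<and> (\<exists>d. (f has_real_derivative d) (at z) \<and> d \<noteq> 0)"

definition simple_zeros :: "(real \<Rightarrow> real) \<Rightarrow> real set" where
  "simple_zeros f = {z \<in> Dom. simple_zero f z}"

definition cond2 :: "(nat \<Rightarrow> nat \<Rightarrow> nat \<Rightarrow> real) \<Rightarrow> (nat \<Rightarrow> nat \<Rightarrow> nat \<Rightarrow> real) \<Rightarrow> (nat \<Rightarrow> real) \<Rightarrow> bool" where
  "cond2 a b lam \<longleftrightarrow> a 1 1 3 = b 1 0 4 \<and> a 1 3 1 = b 1 2 2 \<and> b 1 4 0 = 0 \<and> lam 1 = 0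
     \<and> a 1 2 2 = b 1 1 3 \<and> a 1 4 0 = b 1 3 1 \<and> a 1 0 4 = 0"

definition zs :: "real \<Rightarrow> real" where
  "zs s = ((1 - s^2) / (3 * (1 + s^2))) powr (1/3)"

definition Hpoly :: "(nat \<Rightarrow> nat \<Rightarrow> nat \<Rightarrow> real) \<Rightarrow> (nat \<Rightarrow> nat \<Rightarrow> nat \<Rightarrow> real) \<Rightarrow> (nat \<Rightarrow> real) \<Rightarrow> real \<Rightarrow> real" where
  "Hpoly a b lam s =
    (let H1 = 3*a 2 1 3 + a 2 3 1 - 3*b 2 0 4 - b 2 2 2 - 3*b 2 4 0 + 72*lam 2;
         H2 = -4*a 2 1 3 + 4*b 2 0 4 + 4*a 2 3 1 - 4*b 2 2 2 - 12*b 2 4 0 + 288*lam 2;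
         H3 = 5*a 2 1 3 - 9*a 2 3 1 - 5*b 2 0 4 + 9*b 2 2 2 - 5*b 2 4 0 + 504*lam 2;
         H4 = -8*a 2 1 3 + 8*a 2 3 1 + 8*b 2 0 4 - 8*b 2 2 2 + 40*b 2 4 0 + 576*lam 2
     in H1 * s ^ 6 + H2 * s ^ 5 + H3 * s ^ 4 + H4 * s ^ 3 + H3 * s ^ 2 + H2 * s + H1)"

end

theory Submission
  imports Defs "HOL-Computational_Algebra.Polynomial"
begin

text \<open>In polar coordinates the unperturbed equation is \<open>dr/d\<theta> = r\<^sup>4 cos \<theta>\<close>. Along its
  solutions the averaging integrands become trigonometric polynomials divided by powers of
  \<open>1 - 3z\<^sup>3 sin \<theta>\<close>, and their integrals over a period are elementary. Under the stated
  conditions the extra terms of the second order integrand form the derivative of the periodic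
  function \<open>g\<^sup>2/(1 - 3z\<^sup>3 sin \<theta>)\<close>, so \<open>f\<^sub>1\<close> and \<open>f\<^sub>2\<close> have the same closed form
  \<open>\<pi> z N(t)/(36(1+t)\<^sup>4(1+t\<^sup>2))\<close>, where \<open>t = \<surd>((1-3z\<^sup>3)/(1+3z\<^sup>3))\<close> runs bijectively over
  \<open>(0,1)\<close> and \<open>N\<close> is a palindromic sextic with coefficients linear in the parameters.
  Hence \<open>N(t) = t\<^sup>3 C(t + 1/t)\<close> for a cubic \<open>C\<close>, and since \<open>t \<mapsto> t + 1/t\<close> is injective on
  \<open>(0,1)\<close> there are at most three zeros. The parameters can be chosen so that
  \<open>N(t) = 64(2t-1)(t-2)(3t-1)(t-3)(4t-1)(t-4)\<close>, with the three simple roots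
  \<open>1/2, 1/3, 1/4\<close> in \<open>(0,1)\<close>.\<close>

section \<open>Taylor coefficients of the polar equation\<close>

lemma deriv_quadratic_quotient_at_0:
  fixes n0 n1 n2 d0 d1 d2 :: real
  assumes d0: "d0 \<noteq> 0"
  shows "deriv (\<lambda>e. (n0 + n1*e + n2*e^2)/(d0 + d1*e + d2*e^2)) 0 = (n1*d0 - n0*d1)/d0^2"
    and "deriv (deriv (\<lambda>e. (n0 + n1*e + n2*e^2)/(d0 + d1*e + d2*e^2))) 0
          = 2*((n2*d0 - n0*d2)*d0 - (n1*d0 - n0*d1)*d1)/d0^3"
proof -
  define N where "N = (\<lambda>e::real. n0 + n1*e + n2*e^2)"
  define D where "D = (\<lambda>e::real. d0 + d1*e + d2*e^2)"
  define g where "g = (\<lambda>e. ((n1 + 2*n2*e) * D e - N e * (d1 + 2*d2*e)) / (D e)^2)"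
  define S where "S = {e. D e \<noteq> 0}"
  have open_S: "open S" unfolding S_def D_def
    by (intro open_Collect_neq continuous_intros)
  have "0 \<in> S" using d0 by (simp add: S_def D_def)
  have deriv_eq_g: "deriv (\<lambda>e. N e / D e) e = g e" if "e \<in> S" for e
    using that unfolding S_def g_def N_def D_def
    by (intro DERIV_imp_deriv)
       (auto intro!: derivative_eq_intros simp: power2_eq_square field_simps)
  show "deriv (\<lambda>e. (n0 + n1*e + n2*e^2)/(d0 + d1*e + d2*e^2)) 0 = (n1*d0 - n0*d1)/d0^2"
    using deriv_eq_g[OF \<open>0 \<in> S\<close>] by (simp add: N_def D_def g_def)
  have "(g has_real_derivative
       ((2*n2 * D 0 + (n1 + 2*n2*0) * (d1 + 2*d2*0) - ((n1 + 2*n2*0) * (d1 + 2*d2*0) + N 0 * (2*d2))) * (D 0)^2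
        - ((n1 + 2*n2*0) * D 0 - N 0 * (d1 + 2*d2*0)) * (2 * D 0 * (d1 + 2*d2*0))) / ((D 0)^2)^2) (at 0)"
    unfolding g_def N_def D_def using d0
    by (auto intro!: derivative_eq_intros simp: power2_eq_square)
  moreover have "((2*n2 * D 0 + (n1 + 2*n2*0) * (d1 + 2*d2*0) - ((n1 + 2*n2*0) * (d1 + 2*d2*0) + N 0 * (2*d2))) * (D 0)^2
        - ((n1 + 2*n2*0) * D 0 - N 0 * (d1 + 2*d2*0)) * (2 * D 0 * (d1 + 2*d2*0))) / ((D 0)^2)^2
        = 2*((n2*d0 - n0*d2)*d0 - (n1*d0 - n0*d1)*d1)/d0^3"
    using d0 by (simp add: N_def D_def field_simps power2_eq_square)
                (simp add: algebra_simps power3_eq_cube power4_eq_xxxx)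
  ultimately have "(deriv (\<lambda>e. N e / D e) has_real_derivative
      2*((n2*d0 - n0*d2)*d0 - (n1*d0 - n0*d1)*d1)/d0^3) (at 0)"
    using has_field_derivative_transform_within_open[OF _ open_S \<open>0 \<in> S\<close>] deriv_eq_g by simp
  then show "deriv (deriv (\<lambda>e. (n0 + n1*e + n2*e^2)/(d0 + d1*e + d2*e^2))) 0
          = 2*((n2*d0 - n0*d2)*d0 - (n1*d0 - n0*d1)*d1)/d0^3"
    by (simp add: N_def D_def DERIV_imp_deriv)
qed

definition quartic :: "(nat \<Rightarrow> nat \<Rightarrow> nat \<Rightarrow> real) \<Rightarrow> nat \<Rightarrow> real \<Rightarrow> real" where
  "quartic a k \<theta> = (\<Sum>i\<le>4. a k i (4 - i) * cos \<theta> ^ i * sin \<theta> ^ (4 - i))"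

definition radial_part ::
    "(nat \<Rightarrow> nat \<Rightarrow> nat \<Rightarrow> real) \<Rightarrow> (nat \<Rightarrow> nat \<Rightarrow> nat \<Rightarrow> real) \<Rightarrow> nat \<Rightarrow> real \<Rightarrow> real" where
  "radial_part a b k \<theta> = cos \<theta> * quartic a k \<theta> + sin \<theta> * quartic b k \<theta>"

definition angular_part ::
    "(nat \<Rightarrow> nat \<Rightarrow> nat \<Rightarrow> real) \<Rightarrow> (nat \<Rightarrow> nat \<Rightarrow> nat \<Rightarrow> real) \<Rightarrow> nat \<Rightarrow> real \<Rightarrow> real" where
  "angular_part a b k \<theta> = cos \<theta> * quartic b k \<theta> - sin \<theta> * quartic a k \<theta>"

lemma sum_upto_4: "(\<Sum>i\<le>4::nat. f i) = f 0 + f 1 + f 2 + f 3 + (f 4 :: real)"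
  by (simp add: eval_nat_numeral atMost_Suc add_ac)

lemma quartic_expand:
  "quartic a k \<theta> = a k 0 4 * sin \<theta>^4 + a k 1 3 * cos \<theta> * sin \<theta>^3 + a k 2 2 * cos \<theta>^2 * sin \<theta>^2
     + a k 3 1 * cos \<theta>^3 * sin \<theta> + a k 4 0 * cos \<theta>^4"
  unfolding quartic_def sum_upto_4 by simp

lemma homogeneous_quartic_scale:
  fixes c :: "nat \<Rightarrow> real"
  shows "(\<Sum>i\<le>4. c i * (r*x)^i * (r*y)^(4-i)) = r^4 * (\<Sum>i\<le>4. c i * x^i * y^(4-i))"
  unfolding sum_distrib_left
proof (rule sum.cong[OF refl])
  fix i assume "i \<in> {..4::nat}"
  then have "r^i * r^(4-i) = r^4" by (simp flip: power_add)
  then show "c i * (r*x)^i * (r*y)^(4-i) = r^4 * (c i * x^i * y^(4-i))"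
    by (simp add: power_mult_distrib algebra_simps)
qed

lemma drdtheta_polar:
  "drdtheta a b lam e \<theta> r =
    (r^6 * cos \<theta> + (lam 1 * r^3 + r^6 * radial_part a b 1 \<theta>) * e
       + (lam 2 * r^3 + r^6 * radial_part a b 2 \<theta>) * e^2)
    / (r^2 + r^5 * angular_part a b 1 \<theta> * e + r^5 * angular_part a b 2 \<theta> * e^2)"
proof -
  have circle: "sin \<theta>^2 + cos \<theta>^2 = 1" by (rule sin_cos_squared_add)
  have cube: "(r * cos \<theta>)^3 + (r * cos \<theta>) * (r * sin \<theta>)^2 = r^3 * cos \<theta>"
    using circle by algebra
  have P: "Pfield a lam e (r * cos \<theta>) (r * sin \<theta>) = - (r * sin \<theta>) + r^4 * cos \<theta>^2
      + e * (lam 1 * r * cos \<theta> + r^4 * quartic a 1 \<theta>) + e^2 * (lam 2 * r * cos \<theta> + r^4 * quartic a 2 \<theta>)"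
    unfolding Pfield_def homogeneous_quartic_scale quartic_def[symmetric] cube
    by (simp add: algebra_simps power2_eq_square power_numeral_reduce)
  have Q: "Qfield b lam e (r * cos \<theta>) (r * sin \<theta>) = r * cos \<theta> + r^4 * sin \<theta> * cos \<theta>
      + e * (lam 1 * r * sin \<theta> + r^4 * quartic b 1 \<theta>) + e^2 * (lam 2 * r * sin \<theta> + r^4 * quartic b 2 \<theta>)"
    unfolding Qfield_def homogeneous_quartic_scale quartic_def[symmetric] cube
    by (simp add: algebra_simps power2_eq_square power_numeral_reduce)
  have num: "r * (r * cos \<theta> * Pfield a lam e (r * cos \<theta>) (r * sin \<theta>) + r * sin \<theta> * Qfield b lam e (r * cos \<theta>) (r * sin \<theta>))
      = r^6 * cos \<theta> + (lam 1 * r^3 + r^6 * radial_part a b 1 \<theta>) * e + (lam 2 * r^3 + r^6 * radial_part a b 2 \<theta>) * e^2"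
    unfolding P Q radial_part_def using circle by algebra
  have den: "r * cos \<theta> * Qfield b lam e (r * cos \<theta>) (r * sin \<theta>) - r * sin \<theta> * Pfield a lam e (r * cos \<theta>) (r * sin \<theta>)
      = r^2 + r^5 * angular_part a b 1 \<theta> * e + r^5 * angular_part a b 2 \<theta> * e^2"
    unfolding P Q angular_part_def using circle by algebra
  show ?thesis
    unfolding drdtheta_def Let_def num den ..
qed

lemma Fc_0: "Fc a b lam 0 \<theta> r = r^4 * cos \<theta>"
proof (cases "r = 0")
  case True then show ?thesis by (simp add: Fc_def drdtheta_def)
next
  case False
  then show ?thesis by (simp add: Fc_def drdtheta_polar power2_eq_square eval_nat_numeral)
qed

lemma Fc_1:
  "Fc a b lam 1 \<theta> r = lam 1 * r + r^4 * radial_part a b 1 \<theta> - r^7 * cos \<theta> * angular_part a b 1 \<theta>"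
proof (cases "r = 0")
  case True then show ?thesis by (simp add: Fc_def drdtheta_def)
next
  case False
  then show ?thesis
    unfolding Fc_def drdtheta_polar
    by (simp add: deriv_quadratic_quotient_at_0(1) divide_eq_eq)
       (simp add: power2_eq_square power_numeral_reduce algebra_simps)
qed

lemma Fc_2:
  assumes "angular_part a b 1 \<theta> = 0"
  shows "Fc a b lam 2 \<theta> r = lam 2 * r + r^4 * radial_part a b 2 \<theta> - r^7 * cos \<theta> * angular_part a b 2 \<theta>"
proof (cases "r = 0")
  case True then show ?thesis by (simp add: Fc_def drdtheta_def numeral_2_eq_2)
next
  case False
  have "Fc a b lam 2 \<theta> r = deriv (deriv (\<lambda>e. drdtheta a b lam e \<theta> r)) 0 / 2"
    unfolding Fc_def by (simp only: numeral_2_eq_2 funpow.simps comp_def id_def fact_2) simp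
  also have "\<dots> = ((lam 2 * r^3 + r^6 * radial_part a b 2 \<theta>) * r^2 * r^2
      - r^6 * cos \<theta> * (r^5 * angular_part a b 2 \<theta>) * r^2) / (r^2)^3"
    unfolding drdtheta_polar using False assms
    by (subst deriv_quadratic_quotient_at_0(2)) (auto simp: field_simps)
  also have "\<dots> = lam 2 * r + r^4 * radial_part a b 2 \<theta> - r^7 * cos \<theta> * angular_part a b 2 \<theta>"
    using False by (simp add: divide_eq_eq) (simp add: power2_eq_square power_numeral_reduce algebra_simps)
  finally show ?thesis .
qed

section \<open>Integrals over a period\<close>

lemma has_integral_deriv_times_comp_periodic:
  assumes h: "continuous_on {-1..1} h"
    and \<phi>: "\<And>\<theta>. (\<phi> has_real_derivative \<phi>' \<theta>) (at \<theta>)" "\<And>\<theta>. \<phi> \<theta> \<in> {-1..1}"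
    and periodic: "\<phi> (2*pi) = \<phi> 0"
  shows "((\<lambda>\<theta>. \<phi>' \<theta> * h (\<phi> \<theta>)) has_integral 0) {0..2*pi}"
proof -
  define H where "H = (\<lambda>x. integral {-1..x} h)"
  have H: "(H has_vector_derivative h x) (at x within {-1..1})" if "x \<in> {-1..1}" for x
    unfolding H_def using integral_has_vector_derivative[OF h that] .
  have "((\<lambda>\<theta>. H (\<phi> \<theta>)) has_vector_derivative \<phi>' \<theta> * h (\<phi> \<theta>)) (at \<theta> within {0..2*pi})" for \<theta>
  proof -
    have "(\<phi> has_vector_derivative \<phi>' \<theta>) (at \<theta> within {0..2*pi})"
      using \<phi>(1) by (simp add: has_real_derivative_iff_has_vector_derivative has_vector_derivative_at_within)
    moreover have "(H has_vector_derivative h (\<phi> \<theta>)) (at (\<phi> \<theta>) within \<phi> ` {0..2*pi})"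
      by (rule has_vector_derivative_within_subset[OF H]) (use \<phi>(2) in auto)
    ultimately show ?thesis using vector_diff_chain_within by (fastforce simp: o_def)
  qed
  then have "((\<lambda>\<theta>. \<phi>' \<theta> * h (\<phi> \<theta>)) has_integral (H (\<phi> (2*pi)) - H (\<phi> 0))) {0..2*pi}"
    by (intro fundamental_theorem_of_calculus) auto
  then show ?thesis using periodic by simp
qed

lemma has_integral_cos_times_comp_sin:
  "continuous_on {-1..1} h \<Longrightarrow> ((\<lambda>\<theta>. cos \<theta> * h (sin \<theta>)) has_integral 0) {0..2*pi}"
  by (rule has_integral_deriv_times_comp_periodic) (auto intro: DERIV_sin)

lemma has_integral_sin_times_comp_cos:
  assumes "continuous_on {-1..1} h"
  shows "((\<lambda>\<theta>. sin \<theta> * h (cos \<theta>)) has_integral 0) {0..2*pi}"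
proof -
  have "((\<lambda>\<theta>. - sin \<theta> * h (cos \<theta>)) has_integral 0) {0..2*pi}"
    by (rule has_integral_deriv_times_comp_periodic[OF assms]) (auto intro: DERIV_cos)
  from has_integral_neg[OF this] show ?thesis by simp
qed

lemma has_integral_sin_power2: "((\<lambda>\<theta>. sin \<theta> ^ 2) has_integral pi) {0..2*pi}"
proof -
  define F where "F = (\<lambda>\<theta>::real. (\<theta> - sin \<theta> * cos \<theta>) / 2)"
  have "(F has_real_derivative sin \<theta> ^ 2) (at \<theta>)" for \<theta>
  proof -
    have "(F has_real_derivative (1 - (cos \<theta> * cos \<theta> + sin \<theta> * - sin \<theta>)) / 2) (at \<theta>)"
      unfolding F_def by (auto intro!: derivative_eq_intros)
    moreover have "(1 - (cos \<theta> * cos \<theta> + sin \<theta> * - sin \<theta>)) / 2 = sin \<theta> ^ 2"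
      using sin_cos_squared_add[of \<theta>] by (simp add: power2_eq_square algebra_simps)
    ultimately show ?thesis by simp
  qed
  then have "((\<lambda>\<theta>. sin \<theta> ^ 2) has_integral (F (2*pi) - F 0)) {0..2*pi}"
    by (intro fundamental_theorem_of_calculus)
       (auto simp: has_real_derivative_iff_has_vector_derivative[symmetric] has_field_derivative_at_within)
  then show ?thesis by (simp add: F_def)
qed

lemma has_integral_sin_power4: "((\<lambda>\<theta>. sin \<theta> ^ 4) has_integral 3*pi/4) {0..2*pi}"
proof -
  define F where "F = (\<lambda>\<theta>::real. 3*\<theta>/8 - 3 * sin \<theta> * cos \<theta>/8 - sin \<theta>^3 * cos \<theta>/4)"
  have "(F has_real_derivative sin \<theta> ^ 4) (at \<theta>)" for \<theta>
  proof -
    have circle: "sin \<theta>^2 + cos \<theta>^2 = 1" by (rule sin_cos_squared_add)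
    show ?thesis unfolding F_def by (auto intro!: derivative_eq_intros) (insert circle, algebra)
  qed
  then have "((\<lambda>\<theta>. sin \<theta> ^ 4) has_integral (F (2*pi) - F 0)) {0..2*pi}"
    by (intro fundamental_theorem_of_calculus)
       (auto simp: has_real_derivative_iff_has_vector_derivative[symmetric] has_field_derivative_at_within)
  then show ?thesis by (simp add: F_def)
qed

lemma one_minus_mult_pos:
  fixes k x :: real
  assumes "0 \<le> k" "k < 1" "x \<in> {-1..1}"
  shows "0 < 1 - k * x"
proof -
  have "\<bar>k * x\<bar> \<le> k" using assms by (simp add: abs_mult mult_left_le abs_le_iff)
  then show ?thesis using assms by linarith
qed

lemma arctan_antiderivative_identity:
  fixes s c k w \<beta> :: real
  assumes "s^2 + c^2 = 1" "w^2 = 1 - k^2" "w > 0" "\<beta> * (1 + w) = -k" "1 + \<beta> * s > 0" "1 - k * s \<noteq> 0"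
  shows "(1 + 2 * ((- (\<beta> * s * (1 + \<beta> * s)) - \<beta> * c * (\<beta> * c)) / (1 + \<beta> * s)^2
            / (1 + (\<beta> * c / (1 + \<beta> * s))^2))) / w = 1 / (1 - k * s)"
proof -
  have sq: "(1 + \<beta> * s)^2 + (\<beta> * c)^2 = 1 + 2 * \<beta> * s + \<beta>^2" using assms(1) by algebra
  have pos: "1 + 2 * \<beta> * s + \<beta>^2 > 0"
    unfolding sq[symmetric] using assms(5) by (intro add_pos_nonneg) auto
  have quot: "1 + (\<beta> * c / (1 + \<beta> * s))^2 = (1 + 2 * \<beta> * s + \<beta>^2) / (1 + \<beta> * s)^2"
    using assms(5) sq by (simp add: field_simps power_divide power_mult_distrib)
  have numer: "- (\<beta> * s * (1 + \<beta> * s)) - \<beta> * c * (\<beta> * c) = - \<beta> * (s + \<beta>)"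
    using assms(1) by algebra
  have "1 + 2 * ((- (\<beta> * s * (1 + \<beta> * s)) - \<beta> * c * (\<beta> * c)) / (1 + \<beta> * s)^2
            / (1 + (\<beta> * c / (1 + \<beta> * s))^2))
      = 1 + 2 * (- \<beta> * (s + \<beta>) / (1 + 2 * \<beta> * s + \<beta>^2))"
    unfolding quot numer using assms(5) by simp
  also have "\<dots> = (1 - \<beta>^2) / (1 + 2 * \<beta> * s + \<beta>^2)"
    using pos by (simp add: field_simps) algebra
  also have "\<dots> = w / (1 - k * s)"
  proof -
    have "((1 - \<beta>^2) * (1 - k * s) - w * (1 + 2 * \<beta> * s + \<beta>^2)) * (1 + w)^2 = 0"
      using assms(2,4) by algebra
    then have "(1 - \<beta>^2) * (1 - k * s) = w * (1 + 2 * \<beta> * s + \<beta>^2)" using assms(3) by simp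
    then show ?thesis using pos assms(6) by (simp add: field_simps)
  qed
  finally show ?thesis using assms(3,6) by (simp add: field_simps)
qed

lemma has_integral_inverse_one_minus_sin:
  fixes k :: real
  assumes k: "0 < k" "k < 1"
  shows "((\<lambda>\<theta>. 1 / (1 - k * sin \<theta>)) has_integral 2*pi / sqrt (1 - k^2)) {0..2*pi}"
proof -
  define w where "w = sqrt (1 - k^2)"
  have w: "w > 0" "w^2 = 1 - k^2"
    unfolding w_def using k by (auto simp: power_less_one_iff abs_less_iff abs_le_iff power_le_one)
  define \<beta> where "\<beta> = -k / (1 + w)"
  have \<beta>: "\<beta> * (1 + w) = -k" unfolding \<beta>_def using w by simp
  have "\<bar>\<beta>\<bar> < 1" unfolding \<beta>_def using w k by (simp add: abs_div_pos)
  moreover have "\<bar>\<beta> * sin \<theta>\<bar> \<le> \<bar>\<beta>\<bar>" for \<theta>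
    using abs_sin_le_one[of \<theta>] by (simp add: abs_mult mult_left_le)
  ultimately have \<beta>_sin: "1 + \<beta> * sin \<theta> > 0" for \<theta>
    by (smt (verit) abs_le_iff)
  have k_sin: "1 - k * sin \<theta> \<noteq> 0" for \<theta>
    using one_minus_mult_pos[of k "sin \<theta>"] k by auto
  text \<open>The half-angle substitution gives an antiderivative that jumps by \<open>2\<pi>/w\<close> at
    \<open>\<theta> = \<pi>\<close>; this variant of it is smooth on the whole period.\<close>
  define J where "J = (\<lambda>\<theta>. (\<theta> + 2 * arctan (\<beta> * cos \<theta> / (1 + \<beta> * sin \<theta>))) / w)"
  have "(J has_real_derivative 1 / (1 - k * sin \<theta>)) (at \<theta>)" for \<theta>
  proof -
    note identity = arctan_antiderivative_identity[OF sin_cos_squared_add w(2,1) \<beta> \<beta>_sin k_sin]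
    show ?thesis
      unfolding J_def
      apply (rule derivative_eq_intros refl)+
      using \<beta>_sin[of \<theta>] apply simp
      apply (rule derivative_eq_intros refl)+
      using w(1) apply simp
      apply (subst identity[symmetric])
      using w(1) \<beta>_sin[of \<theta>] apply (simp add: power2_eq_square divide_simps)
      done
  qed
  then have "((\<lambda>\<theta>. 1 / (1 - k * sin \<theta>)) has_integral (J (2*pi) - J 0)) {0..2*pi}"
    by (intro fundamental_theorem_of_calculus)
       (auto simp: has_real_derivative_iff_has_vector_derivative[symmetric] has_field_derivative_at_within)
  moreover have "J (2*pi) - J 0 = 2*pi / sqrt (1 - k^2)"
    unfolding J_def w_def by (simp add: diff_divide_distrib[symmetric])
  ultimately show ?thesis by simp
qed

lemma radial_part_decomp:
  fixes \<theta> :: real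
  defines "s \<equiv> sin \<theta>" and "c \<equiv> cos \<theta>"
  shows "radial_part a b m \<theta> =
      c * ((a m 0 4 + b m 1 3) * s^4 + (a m 2 2 + b m 3 1) * (1 - s^2) * s^2 + a m 4 0 * (1 - s^2)^2)
    + s * (b m 0 4 * (1 - c^2)^2 + (a m 1 3 + b m 2 2) * c^2 * (1 - c^2) + (a m 3 1 + b m 4 0) * c^4)"
proof -
  have "s^2 + c^2 = 1" unfolding s_def c_def by (rule sin_cos_squared_add)
  then show ?thesis unfolding radial_part_def quartic_expand s_def[symmetric] c_def[symmetric] by algebra
qed

lemma cos_angular_part_decomp:
  fixes \<theta> :: real
  defines "s \<equiv> sin \<theta>" and "c \<equiv> cos \<theta>"
  shows "cos \<theta> * angular_part a b m \<theta> =
      c * (- a m 0 4 * s^5 + (b m 1 3 - a m 2 2) * (1 - s^2) * s^3 + (b m 3 1 - a m 4 0) * (1 - s^2)^2 * s)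
    + ((b m 0 4 - a m 1 3) * (1 - s^2) * s^4 + (b m 2 2 - a m 3 1) * (1 - s^2)^2 * s^2 + b m 4 0 * (1 - s^2)^3)"
proof -
  have "s^2 + c^2 = 1" unfolding s_def c_def by (rule sin_cos_squared_add)
  then show ?thesis unfolding angular_part_def quartic_expand s_def[symmetric] c_def[symmetric] by algebra
qed

lemma has_integral_radial_part: "(radial_part a b m has_integral 0) {0..2*pi}"
proof -
  have "((\<lambda>\<theta>. cos \<theta> * (\<lambda>x. (a m 0 4 + b m 1 3) * x^4 + (a m 2 2 + b m 3 1) * (1 - x^2) * x^2 + a m 4 0 * (1 - x^2)^2) (sin \<theta>)
      + sin \<theta> * (\<lambda>y. b m 0 4 * (1 - y^2)^2 + (a m 1 3 + b m 2 2) * y^2 * (1 - y^2) + (a m 3 1 + b m 4 0) * y^4) (cos \<theta>))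
      has_integral (0 + 0)) {0..2*pi}"
    by (intro has_integral_add has_integral_cos_times_comp_sin has_integral_sin_times_comp_cos continuous_intros)
  then show ?thesis by (simp add: radial_part_decomp[abs_def])
qed

lemma has_integral_one_minus_mult_sin: "((\<lambda>\<theta>. 1 - k * sin \<theta>) has_integral 2*pi) {0..2*pi}"
proof -
  have "((\<lambda>\<theta>. 1 - k * (sin \<theta> * (\<lambda>y. 1) (cos \<theta>))) has_integral (2*pi - k * 0)) {0..2*pi}"
    using has_integral_const_real[of "1::real" 0 "2*pi"]
    by (intro has_integral_diff has_integral_mult_right has_integral_sin_times_comp_cos continuous_intros)
       (simp_all add: real_scaleR_def)
  then show ?thesis by simp
qed

text \<open>Dividing \<open>B\<^sub>2(1-x\<^sup>2)x\<^sup>4 + B\<^sub>1(1-x\<^sup>2)\<^sup>2x\<^sup>2 + B\<^sub>0(1-x\<^sup>2)\<^sup>3\<close> by \<open>1 - kx\<close> leaves the remainder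
  \<open>\<rho>\<close>; the even part of the quotient is \<open>R\<^sub>0 + R\<^sub>2x\<^sup>2 + R\<^sub>4x\<^sup>4\<close>, and its odd part integrates to
  zero after \<open>x = sin \<theta>\<close>.\<close>

definition T_integral :: "real \<Rightarrow> real \<Rightarrow> real \<Rightarrow> real \<Rightarrow> real" where
  "T_integral k B0 B1 B2 =
    (let e2 = -3*B0 + B1; e4 = 3*B0 - 2*B1 + B2; e6 = -B0 + B1 - B2;
         \<rho> = B0 + e2/k^2 + e4/k^4 + e6/k^6;
         R0 = B0 - \<rho>; R2 = e2 + k^2*R0; R4 = e4 + k^2*e2 + k^4*R0
     in R0 * (2*pi) + R2 * pi + R4 * (3*pi/4) + \<rho> * (2*pi / sqrt (1 - k^2)))"

lemma division_by_one_minus_mult: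
  fixes k x B0 B1 B2 :: real
  assumes "k \<noteq> 0"
  defines "e2 \<equiv> -3*B0 + B1" and "e4 \<equiv> 3*B0 - 2*B1 + B2" and "e6 \<equiv> -B0 + B1 - B2"
  defines "\<rho> \<equiv> B0 + e2/k^2 + e4/k^4 + e6/k^6"
  defines "R0 \<equiv> B0 - \<rho>"
  defines "R2 \<equiv> e2 + k^2*R0" and "R4 \<equiv> e4 + k^2*e2 + k^4*R0"
  shows "B2*(1-x^2)*x^4 + B1*(1-x^2)^2*x^2 + B0*(1-x^2)^3
       = (1 - k*x) * (R0 + k*R0*x + R2*x^2 + k*R2*x^3 + R4*x^4 + k*R4*x^5) + \<rho>"
  using assms(1) unfolding \<rho>_def R0_def R2_def R4_def e2_def e4_def e6_def
  by (simp add: field_simps) algebra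

lemma has_integral_cos_angular_part_div:
  fixes k :: real
  assumes k: "0 < k" "k < 1"
  shows "((\<lambda>\<theta>. cos \<theta> * angular_part a b m \<theta> / (1 - k * sin \<theta>)) has_integral
           T_integral k (b m 4 0) (b m 2 2 - a m 3 1) (b m 0 4 - a m 1 3)) {0..2*pi}"
proof -
  define B0 B1 B2 where "B0 = b m 4 0" and "B1 = b m 2 2 - a m 3 1" and "B2 = b m 0 4 - a m 1 3"
  define e2 e4 e6 where "e2 = -3*B0 + B1" and "e4 = 3*B0 - 2*B1 + B2" and "e6 = -B0 + B1 - B2"
  define \<rho> where "\<rho> = B0 + e2/k^2 + e4/k^4 + e6/k^6"
  define R0 where "R0 = B0 - \<rho>"
  define R2 R4 where "R2 = e2 + k^2*R0" and "R4 = e4 + k^2*e2 + k^4*R0"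
  define P where "P = (\<lambda>x::real. - a m 0 4 * x^5 + (b m 1 3 - a m 2 2) * (1 - x^2) * x^3 + (b m 3 1 - a m 4 0) * (1 - x^2)^2 * x)"
  define h where "h = (\<lambda>x. P x / (1 - k*x))"
  define g where "g = (\<lambda>y::real. k*R0 + k*R2*(1 - y^2) + k*R4*(1 - y^2)^2)"
  have division: "B2*(1-x^2)*x^4 + B1*(1-x^2)^2*x^2 + B0*(1-x^2)^3
       = (1 - k*x) * (R0 + k*R0*x + R2*x^2 + k*R2*x^3 + R4*x^4 + k*R4*x^5) + \<rho>" for x
    unfolding \<rho>_def R0_def R2_def R4_def e2_def e4_def e6_def
    by (rule division_by_one_minus_mult) (use k in simp)
  have split: "cos \<theta> * angular_part a b m \<theta> / (1 - k * sin \<theta>) =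
      cos \<theta> * h (sin \<theta>) + sin \<theta> * g (cos \<theta>) + (R0 + (R2 * sin \<theta>^2 + (R4 * sin \<theta>^4 + \<rho> * (1 / (1 - k * sin \<theta>)))))" for \<theta>
  proof -
    have ne: "1 - k * sin \<theta> \<noteq> 0" using one_minus_mult_pos[of k "sin \<theta>"] k by auto
    have "sin \<theta>^2 + cos \<theta>^2 = 1" by (rule sin_cos_squared_add)
    then have quotient: "R0 + k*R0 * sin \<theta> + R2 * sin \<theta>^2 + k*R2 * sin \<theta>^3 + R4 * sin \<theta>^4 + k*R4 * sin \<theta>^5
       = sin \<theta> * g (cos \<theta>) + (R0 + (R2 * sin \<theta>^2 + R4 * sin \<theta>^4))"
      unfolding g_def by algebra
    have "cos \<theta> * angular_part a b m \<theta> = cos \<theta> * P (sin \<theta>) + ((1 - k * sin \<theta>) *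
        (R0 + k*R0 * sin \<theta> + R2 * sin \<theta>^2 + k*R2 * sin \<theta>^3 + R4 * sin \<theta>^4 + k*R4 * sin \<theta>^5) + \<rho>)"
      unfolding cos_angular_part_decomp P_def division[symmetric] B0_def B1_def B2_def by simp
    moreover have "(X + (U * V + r)) / U = X / U + V + r * (1 / U)" if "U \<noteq> 0" for X U V r :: real
      using that by (simp add: field_simps)
    ultimately show ?thesis using ne by (simp add: h_def quotient)
  qed
  have "continuous_on {-1..1} h"
    unfolding h_def P_def using one_minus_mult_pos[of k] k
    by (intro continuous_intros) force
  moreover have "continuous_on {-1..1} g" unfolding g_def by (intro continuous_intros)
  ultimately have "((\<lambda>\<theta>. cos \<theta> * h (sin \<theta>) + sin \<theta> * g (cos \<theta>) + (R0 + (R2 * sin \<theta>^2 + (R4 * sin \<theta>^4 + \<rho> * (1 / (1 - k * sin \<theta>))))))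
      has_integral (0 + 0 + (R0 * (2*pi) + (R2 * pi + (R4 * (3*pi/4) + \<rho> * (2*pi / sqrt (1 - k^2))))))) {0..2*pi}"
    using has_integral_const_real[of R0 0 "2*pi"]
    by (intro has_integral_add has_integral_cos_times_comp_sin has_integral_sin_times_comp_cos
        has_integral_mult_right has_integral_sin_power2 has_integral_sin_power4
        has_integral_inverse_one_minus_sin[OF k]) (simp_all add: mult.commute)
  moreover have "T_integral k B0 B1 B2 = R0 * (2*pi) + (R2 * pi + (R4 * (3*pi/4) + \<rho> * (2*pi / sqrt (1 - k^2))))"
    unfolding T_integral_def Let_def e2_def e4_def e6_def \<rho>_def R0_def R2_def R4_def by (simp add: add.assoc)
  ultimately show ?thesis unfolding split B0_def B1_def B2_def by simp
qed

section \<open>The closed form of the averaged functions\<close>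

definition sextic :: "real \<Rightarrow> real \<Rightarrow> real \<Rightarrow> real \<Rightarrow> real \<Rightarrow> real" where
  "sextic L B0 B1 B2 t =
    (let H1 = 72*L - 3*B0 - B1 - 3*B2; H2 = 288*L - 12*B0 - 4*B1 + 4*B2;
         H3 = 504*L - 5*B0 + 9*B1 - 5*B2; H4 = 576*L + 40*B0 - 8*B1 + 8*B2
     in H1 * t^6 + H2 * t^5 + H3 * t^4 + H4 * t^3 + H3 * t^2 + H2 * t + H1)"

definition cubic :: "real \<Rightarrow> real \<Rightarrow> real \<Rightarrow> real \<Rightarrow> real poly" where
  "cubic L B0 B1 B2 =
    (let H1 = 72*L - 3*B0 - B1 - 3*B2; H2 = 288*L - 12*B0 - 4*B1 + 4*B2;
         H3 = 504*L - 5*B0 + 9*B1 - 5*B2; H4 = 576*L + 40*B0 - 8*B1 + 8*B2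
     in [:H4 - 2*H2, H3 - 3*H1, H2, H1:])"

lemma sextic_eq_cubic: "t \<noteq> 0 \<Longrightarrow> sextic L B0 B1 B2 t = t^3 * poly (cubic L B0 B1 B2) (t + 1/t)"
  unfolding sextic_def cubic_def Let_def
  by (simp add: field_simps) (simp add: algebra_simps power2_eq_square power3_eq_cube eval_nat_numeral)

lemma degree_cubic: "degree (cubic L B0 B1 B2) \<le> 3"
  unfolding cubic_def Let_def by (simp add: degree_pCons_eq_if)

lemma cubic_eq_0_imp_sextic_eq_0:
  assumes "cubic L B0 B1 B2 = 0"
  shows "sextic L B0 B1 B2 t = 0"
proof -
  have raw: "576*L + 40*B0 - 8*B1 + 8*B2 - 2*(288*L - 12*B0 - 4*B1 + 4*B2) = 0"
    "504*L - 5*B0 + 9*B1 - 5*B2 - 3*(72*L - 3*B0 - B1 - 3*B2) = 0"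
    "288*L - 12*B0 - 4*B1 + 4*B2 = 0" "72*L - 3*B0 - B1 - 3*B2 = 0"
    using assms unfolding cubic_def Let_def pCons_eq_0_iff by simp_all
  have "72*L - 3*B0 - B1 - 3*B2 = 0" "288*L - 12*B0 - 4*B1 + 4*B2 = 0"
    "504*L - 5*B0 + 9*B1 - 5*B2 = 0" "576*L + 40*B0 - 8*B1 + 8*B2 = 0"
    by (smt (verit) raw)+
  then show ?thesis unfolding sextic_def Let_def by simp
qed

lemma T_integral_eq_cubic:
  fixes k w L B0 B1 B2 :: real
  assumes k: "0 < k" and w: "0 < w" "w^2 = 1 - k^2"
  shows "2*pi*L - k^2/9 * T_integral k B0 B1 B2
       = pi * w^3 * poly (cubic L B0 B1 B2) (2/w) * (1 - w)^2 / (288*k^4)"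
proof -
  have sqrt_w: "sqrt (1 - k^2) = w" using w by (metis abs_of_pos real_sqrt_abs)
  have "(2*pi*L - k^2/9 * T_integral k B0 B1 B2) * (288*k^4*w^3)
      = (pi * w^3 * poly (cubic L B0 B1 B2) (2/w) * (1 - w)^2 / (288*k^4)) * (288*k^4*w^3)"
    unfolding T_integral_def cubic_def Let_def sqrt_w
    using k w(1) apply (simp add: field_simps)
    using w(2) by algebra
  moreover have nonzero: "288*k^4*w^3 \<noteq> 0" using k w by simp
  ultimately show ?thesis by (simp only: mult_right_cancel[OF nonzero])
qed

definition tz :: "real \<Rightarrow> real" where "tz z = sqrt ((1 - 3*z^3) / (1 + 3*z^3))"

definition averaged :: "real \<Rightarrow> real \<Rightarrow> real \<Rightarrow> real \<Rightarrow> real \<Rightarrow> real" where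
  "averaged L B0 B1 B2 z = pi * z * sextic L B0 B1 B2 (tz z) / (36 * (1 + tz z)^4 * (1 + (tz z)^2))"

lemma tz_props:
  fixes z :: real
  assumes "0 < z" "3*z^3 < 1"
  shows "0 < tz z" "tz z < 1" "3*z^3 = (1 - (tz z)^2) / (1 + (tz z)^2)"
    "sqrt (1 - (3*z^3)^2) = 2 * tz z / (1 + (tz z)^2)"
proof -
  define k t where "k = 3*z^3" and "t = tz z"
  have k: "0 < k" "k < 1" using assms by (auto simp: k_def)
  have t2: "t^2 = (1 - k) / (1 + k)" unfolding t_def tz_def k_def[symmetric] using k by simp
  show "0 < tz z" unfolding tz_def k_def[symmetric] using k by (simp add: divide_pos_pos)
  then have "0 < t" by (simp add: t_def)
  have "t^2 < 1" unfolding t2 using k by simp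
  then show "tz z < 1" using \<open>0 < t\<close> by (simp add: t_def power_less_one_iff)
  show "3*z^3 = (1 - (tz z)^2) / (1 + (tz z)^2)"
    unfolding k_def[symmetric] t_def[symmetric] t2 using k by (simp add: field_simps)
  have p: "1 + t^2 = 2 / (1 + k)" unfolding t2 using k by (simp add: field_simps)
  have "(2*t / (1 + t^2))^2 = 4*t^2 / (1 + t^2)^2" by (simp add: power_divide power_mult_distrib)
  also have "\<dots> = 1 - k^2" unfolding p unfolding t2 using k by (simp add: field_simps power2_eq_square)
  finally have "(2*t / (1 + t^2))^2 = 1 - k^2" .
  then show "sqrt (1 - (3*z^3)^2) = 2 * tz z / (1 + (tz z)^2)"
    using \<open>0 < t\<close> unfolding k_def[symmetric] t_def[symmetric]
    by (metis real_sqrt_abs abs_of_nonneg divide_nonneg_pos less_eq_real_def mult_pos_pos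
        zero_less_numeral add_pos_nonneg zero_le_power2 zero_less_one)
qed

lemma averaged_eq_T_integral:
  fixes z L B0 B1 B2 :: real
  assumes z: "0 < z" "3*z^3 < 1"
  shows "2*pi*L*z - z^7 * T_integral (3*z^3) B0 B1 B2 = averaged L B0 B1 B2 z"
proof -
  define k t w where "k = 3*z^3" and "t = tz z" and "w = 2*t / (1 + t^2)"
  have t: "0 < t" "t < 1" using tz_props[OF z] by (auto simp: t_def)
  have p: "0 < 1 + t^2" by (simp add: add_pos_nonneg)
  have k0: "0 < k" using z by (simp add: k_def)
  have k_t: "k = (1 - t^2) / (1 + t^2)" using tz_props[OF z] by (simp add: t_def k_def)
  have w: "0 < w" "w^2 = 1 - k^2"
    using t p unfolding w_def k_t by (auto simp: field_simps) algebra
  have "z^7 = z * (k^2/9)" by (simp add: k_def power_mult_distrib flip: power_mult power_Suc)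
  then have "2*pi*L*z - z^7 * T_integral k B0 B1 B2 = z * (2*pi*L - k^2/9 * T_integral k B0 B1 B2)"
    by (simp add: algebra_simps)
  also have "\<dots> = z * (pi * w^3 * poly (cubic L B0 B1 B2) (2/w) * (1 - w)^2 / (288*k^4))"
    using z by (simp only: T_integral_eq_cubic[OF k0 w])
  also have "\<dots> = pi * z * poly (cubic L B0 B1 B2) (t + 1/t) * (w^3 * (1 - w)^2 / (288*k^4))"
  proof -
    have "2/w = t + 1/t" unfolding w_def using t by (simp add: field_simps power2_eq_square)
    then show ?thesis by simp
  qed
  also have "w^3 * (1 - w)^2 / (288*k^4) = t^3 / (36 * (1 + t)^4 * (1 + t^2))"
  proof -
    have one_minus_w: "1 - w = (1 - t)^2 / (1 + t^2)"
      unfolding w_def using p by (simp add: field_simps power2_eq_square)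
    have "1 - t^2 = (1 - t) * (1 + t)" by algebra
    then have k_factored: "k = ((1 - t) * (1 + t)) / (1 + t^2)" unfolding k_t by simp
    have "(2*t/p)^3 * (m^2/p)^2 / (288*((m*n)/p)^4) = t^3 / (36*n^4*p)"
      if "p \<noteq> 0" "m \<noteq> 0" "n \<noteq> 0" for m n p :: real
      using that by (simp add: field_simps power_divide power_mult_distrib) (simp add: power_numeral_reduce algebra_simps)
    then show ?thesis unfolding one_minus_w unfolding k_factored w_def using t p by simp
  qed
  finally show ?thesis
    unfolding averaged_def k_def[symmetric] t_def[symmetric]
      sextic_eq_cubic[OF less_imp_neq[OF t(1), symmetric]]
    by (simp add: mult_ac)
qed

lemma has_integral_averaging_integrand:
  assumes z: "0 < z" "3*z^3 < 1"
  shows "((\<lambda>\<theta>. L * z * (1 - 3*z^3 * sin \<theta>) + z^4 * radial_part a b m \<theta>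
              - z^7 * (cos \<theta> * angular_part a b m \<theta> / (1 - 3*z^3 * sin \<theta>)))
      has_integral averaged L (b m 4 0) (b m 2 2 - a m 3 1) (b m 0 4 - a m 1 3) z) {0..2*pi}"
proof -
  define k where "k = 3*z^3"
  have k: "0 < k" "k < 1" using z by (auto simp: k_def)
  note I = has_integral_diff[OF has_integral_add[OF
      has_integral_mult_right[OF has_integral_one_minus_mult_sin[of k], of "L * z"]
      has_integral_mult_right[OF has_integral_radial_part[of a b m], of "z^4"]]
      has_integral_mult_right[OF has_integral_cos_angular_part_div[OF k, of a b m], of "z^7"]]
  show ?thesis unfolding k_def[symmetric]
    by (rule has_integral_eq_rhs[OF I])
       (simp add: averaged_eq_T_integral[OF z, symmetric] k_def algebra_simps)
qed

section \<open>The first and second order averaged functions\<close>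

lemma powr_one_third:
  fixes u :: real
  assumes "0 < u"
  shows "u powr (-1/3) = 1 / u powr (1/3)" "u powr (-4/3) = 1 / (u powr (1/3))^4"
    "(u powr (1/3))^3 = u" "0 < u powr (1/3)"
proof -
  show "u powr (-1/3) = 1 / u powr (1/3)" using powr_minus_divide[of u "1/3"] by simp
  have "(u powr (1/3))^4 = u powr (4/3)" using assms by (simp add: powr_power)
  then show "u powr (-4/3) = 1 / (u powr (1/3))^4" using powr_minus_divide[of u "4/3"] by simp
  show "(u powr (1/3))^3 = u" using assms by (simp add: powr_power)
  show "0 < u powr (1/3)" using assms by simp
qed

lemma mem_Dom_iff: "z \<in> Dom \<longleftrightarrow> 0 < z \<and> 3*z^3 < 1"
proof -
  define c :: real where "c = 3 powr (-1/3)"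
  have "0 < c" unfolding c_def by simp
  have "c^3 = 1/3" unfolding c_def using powr_one_third(1,3)[of 3] by (simp add: power_one_over)
  moreover have "z < c \<longleftrightarrow> z^3 < c^3" if "0 < z" for z
    using that \<open>0 < c\<close> by (meson less_imp_le power_less_imp_less_base power_strict_mono zero_less_numeral)
  ultimately show ?thesis unfolding Dom_def c_def[symmetric] by auto
qed

lemma first_order_integrand_eq:
  assumes z: "0 < z" "3*z^3 < 1"
  shows "Fc a b lam 1 \<theta> (rsol \<theta> z) / Ysol \<theta> z =
     lam 1 * z * (1 - 3*z^3 * sin \<theta>) + z^4 * radial_part a b 1 \<theta>
       - z^7 * (cos \<theta> * angular_part a b 1 \<theta> / (1 - 3*z^3 * sin \<theta>))"
proof -
  define u where "u = 1 - 3*z^3 * sin \<theta>"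
  define v where "v = u powr (1/3)"
  have "0 < u" unfolding u_def using one_minus_mult_pos[of "3*z^3" "sin \<theta>"] z by simp
  note v = powr_one_third[OF this, folded v_def]
  have r: "rsol \<theta> z = z / v" and Y: "Ysol \<theta> z = 1 / v^4"
    unfolding rsol_def Ysol_def u_def[symmetric] v by simp_all
  show ?thesis unfolding Fc_1 r Y u_def[symmetric] v(3)[symmetric] using v(4)
    by (simp add: field_simps) (simp add: power_numeral_reduce algebra_simps)
qed

lemma Ysol_2pi: "Ysol (2*pi) z = 1"
  by (simp add: Ysol_def)

lemma f1_eq_averaged:
  assumes "z \<in> Dom"
  shows "f1 a b lam z = averaged (lam 1) (b 1 4 0) (b 1 2 2 - a 1 3 1) (b 1 0 4 - a 1 1 3) z"
proof -
  have z: "0 < z" "3*z^3 < 1" using assms by (simp_all add: mem_Dom_iff)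
  have "((\<lambda>\<theta>. Fc a b lam 1 \<theta> (rsol \<theta> z) / Ysol \<theta> z) has_integral
      averaged (lam 1) (b 1 4 0) (b 1 2 2 - a 1 3 1) (b 1 0 4 - a 1 1 3) z) {0..2*pi}"
    unfolding first_order_integrand_eq[OF z] by (rule has_integral_averaging_integrand[OF z])
  then show ?thesis unfolding f1_def y1_def Ysol_2pi by (simp add: integral_unique)
qed

lemma cond2_D:
  assumes "cond2 a b lam"
  shows "a 1 1 3 = b 1 0 4" "a 1 3 1 = b 1 2 2" "b 1 4 0 = 0" "lam 1 = 0"
    "a 1 2 2 = b 1 1 3" "a 1 4 0 = b 1 3 1" "a 1 0 4 = 0"
  using assms by (simp_all add: cond2_def)

lemma cond2_angular_part_1: "cond2 a b lam \<Longrightarrow> angular_part a b 1 \<theta> = 0"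
  unfolding angular_part_def quartic_expand cond2_D by algebra

lemma cond2_radial_part_1:
  assumes "cond2 a b lam"
  shows "radial_part a b 1 \<theta> = b 1 3 1 * cos \<theta>^3 + b 1 2 2 * cos \<theta>^2 * sin \<theta>
      + b 1 1 3 * cos \<theta> * sin \<theta>^2 + b 1 0 4 * sin \<theta>^3"
proof -
  have "sin \<theta>^2 + cos \<theta>^2 = 1" by (rule sin_cos_squared_add)
  then show ?thesis unfolding radial_part_def quartic_expand cond2_D[OF assms] by algebra
qed

definition radial_primitive :: "(nat \<Rightarrow> nat \<Rightarrow> nat \<Rightarrow> real) \<Rightarrow> real \<Rightarrow> real" where
  "radial_primitive b \<theta> = b 1 3 1 * (sin \<theta> - sin \<theta>^3/3) - b 1 2 2 * cos \<theta>^3/3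
      + b 1 1 3 * sin \<theta>^3/3 + b 1 0 4 * (cos \<theta>^3/3 - cos \<theta>)"

lemma has_real_derivative_radial_primitive:
  assumes "cond2 a b lam"
  shows "(radial_primitive b has_real_derivative radial_part a b 1 \<theta>) (at \<theta>)"
proof -
  have circle: "sin \<theta>^2 + cos \<theta>^2 = 1" by (rule sin_cos_squared_add)
  show ?thesis unfolding cond2_radial_part_1[OF assms] radial_primitive_def
    by (auto intro!: derivative_eq_intros) (insert circle, algebra)
qed

lemma y1_cond2:
  assumes c: "cond2 a b lam" and z: "0 < z" "3*z^3 < 1" and "0 \<le> \<theta>"
  shows "y1 a b lam \<theta> z = Ysol \<theta> z * (z^4 * (radial_primitive b \<theta> - radial_primitive b 0))"
proof -
  have primitive: "((\<lambda>s. z^4 * radial_part a b 1 s) has_integral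
      (z^4 * radial_primitive b \<theta> - z^4 * radial_primitive b 0)) {0..\<theta>}"
    using has_real_derivative_radial_primitive[OF c] \<open>0 \<le> \<theta>\<close>
    by (intro fundamental_theorem_of_calculus)
       (auto intro!: derivative_eq_intros
         simp: has_real_derivative_iff_has_vector_derivative[symmetric] has_field_derivative_at_within)
  have integrand: "Fc a b lam 1 s (rsol s z) / Ysol s z = z^4 * radial_part a b 1 s" for s
    unfolding first_order_integrand_eq[OF z] cond2_angular_part_1[OF c] cond2_D[OF c] by simp
  show ?thesis
    unfolding y1_def integrand by (subst integral_unique[OF primitive]) (simp add: algebra_simps)
qed

lemma deriv2_Fc_0: "deriv (deriv (\<lambda>\<rho>. Fc a b lam 0 s \<rho>)) r = 12 * r^2 * cos s"
proof -
  have "deriv (\<lambda>\<rho>. Fc a b lam 0 s \<rho>) = (\<lambda>\<rho>. 4 * \<rho>^3 * cos s)"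
    unfolding Fc_0 by (intro ext DERIV_imp_deriv) (auto intro!: derivative_eq_intros)
  then show ?thesis by (auto intro!: DERIV_imp_deriv derivative_eq_intros)
qed

lemma deriv_Fc_1_cond2:
  assumes "cond2 a b lam"
  shows "deriv (\<lambda>\<rho>. Fc a b lam 1 s \<rho>) r = 4 * r^3 * radial_part a b 1 s"
proof -
  have "(\<lambda>\<rho>. Fc a b lam 1 s \<rho>) = (\<lambda>\<rho>. \<rho>^4 * radial_part a b 1 s)"
    using assms unfolding Fc_1 cond2_angular_part_1[OF assms] by (simp add: cond2_def)
  then show ?thesis by (auto intro!: DERIV_imp_deriv derivative_eq_intros)
qed

lemma second_order_integrand_eq:
  assumes c: "cond2 a b lam" and z: "0 < z" "3*z^3 < 1" and "0 \<le> \<theta>"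
  defines "g \<equiv> radial_primitive b \<theta> - radial_primitive b 0" and "u \<equiv> 1 - 3*z^3 * sin \<theta>"
  shows "(2 * Fc a b lam 2 \<theta> (rsol \<theta> z)
         + deriv (deriv (\<lambda>\<rho>. Fc a b lam 0 \<theta> \<rho>)) (rsol \<theta> z) * (y1 a b lam \<theta> z)^2
         + 2 * deriv (\<lambda>\<rho>. Fc a b lam 1 \<theta> \<rho>) (rsol \<theta> z) * y1 a b lam \<theta> z) / Ysol \<theta> z
    = 2 * (lam 2 * z * u + z^4 * radial_part a b 2 \<theta> - z^7 * (cos \<theta> * angular_part a b 2 \<theta> / u))
      + 4 * z^7 * (2 * g * radial_part a b 1 \<theta> / u + g^2 * (3 * z^3 * cos \<theta>) / u^2)"
proof -
  define v where "v = u powr (1/3)"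
  have "0 < u" unfolding u_def using one_minus_mult_pos[of "3*z^3" "sin \<theta>"] z by simp
  note v = powr_one_third[OF this, folded v_def]
  have r: "rsol \<theta> z = z / v" and Y: "Ysol \<theta> z = 1 / v^4"
    unfolding rsol_def Ysol_def u_def[symmetric] v by simp_all
  have y: "y1 a b lam \<theta> z = 1 / v^4 * (z^4 * g)"
    unfolding y1_cond2[OF c z \<open>0 \<le> \<theta>\<close>] Y g_def ..
  show ?thesis
    unfolding y deriv2_Fc_0 deriv_Fc_1_cond2[OF c] Fc_2[OF cond2_angular_part_1[OF c]] r Y v(3)[symmetric]
    using v(4) by (simp add: field_simps) (simp add: power_numeral_reduce algebra_simps)
qed

lemma has_integral_y1_terms:
  assumes c: "cond2 a b lam" and z: "0 < z" "3*z^3 < 1"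
  defines "g \<equiv> \<lambda>\<theta>. radial_primitive b \<theta> - radial_primitive b 0" and "u \<equiv> \<lambda>\<theta>. 1 - 3*z^3 * sin \<theta>"
  shows "((\<lambda>\<theta>. 2 * g \<theta> * radial_part a b 1 \<theta> / u \<theta> + (g \<theta>)^2 * (3 * z^3 * cos \<theta>) / (u \<theta>)^2)
      has_integral 0) {0..2*pi}"
proof -
  have u: "u \<theta> \<noteq> 0" for \<theta> unfolding u_def using one_minus_mult_pos[of "3*z^3" "sin \<theta>"] z by simp
  define \<Psi> where "\<Psi> = (\<lambda>\<theta>. (g \<theta>)^2 / u \<theta>)"
  have "(\<Psi> has_real_derivative 2 * g \<theta> * radial_part a b 1 \<theta> / u \<theta> + (g \<theta>)^2 * (3 * z^3 * cos \<theta>) / (u \<theta>)^2) (at \<theta>)" for \<theta>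
  proof -
    have "(g has_real_derivative radial_part a b 1 \<theta>) (at \<theta>)"
      unfolding g_def using has_real_derivative_radial_primitive[OF c] by (auto intro!: derivative_eq_intros)
    moreover have "(u has_real_derivative - (3 * z^3 * cos \<theta>)) (at \<theta>)"
      unfolding u_def by (auto intro!: derivative_eq_intros)
    ultimately show ?thesis unfolding \<Psi>_def using u[of \<theta>]
      by (auto intro!: derivative_eq_intros simp: field_simps power2_eq_square)
  qed
  then have "((\<lambda>\<theta>. 2 * g \<theta> * radial_part a b 1 \<theta> / u \<theta> + (g \<theta>)^2 * (3 * z^3 * cos \<theta>) / (u \<theta>)^2)
      has_integral \<Psi> (2*pi) - \<Psi> 0) {0..2*pi}"
    by (intro fundamental_theorem_of_calculus)
       (auto simp: has_real_derivative_iff_has_vector_derivative[symmetric] has_field_derivative_at_within)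
  moreover have "\<Psi> (2*pi) - \<Psi> 0 = 0" by (simp add: \<Psi>_def g_def u_def radial_primitive_def)
  ultimately show ?thesis by simp
qed

lemma f2_eq_averaged:
  assumes c: "cond2 a b lam" and "z \<in> Dom"
  shows "f2 a b lam z = averaged (lam 2) (b 2 4 0) (b 2 2 2 - a 2 3 1) (b 2 0 4 - a 2 1 3) z"
proof -
  have z: "0 < z" "3*z^3 < 1" using \<open>z \<in> Dom\<close> by (simp_all add: mem_Dom_iff)
  have "((\<lambda>\<theta>. 2 * (lam 2 * z * (1 - 3*z^3 * sin \<theta>) + z^4 * radial_part a b 2 \<theta>
          - z^7 * (cos \<theta> * angular_part a b 2 \<theta> / (1 - 3*z^3 * sin \<theta>)))
        + 4 * z^7 * (2 * (radial_primitive b \<theta> - radial_primitive b 0) * radial_part a b 1 \<theta> / (1 - 3*z^3 * sin \<theta>)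
          + (radial_primitive b \<theta> - radial_primitive b 0)^2 * (3 * z^3 * cos \<theta>) / (1 - 3*z^3 * sin \<theta>)^2))
      has_integral 2 * averaged (lam 2) (b 2 4 0) (b 2 2 2 - a 2 3 1) (b 2 0 4 - a 2 1 3) z + 4 * z^7 * 0) {0..2*pi}"
    by (intro has_integral_add has_integral_mult_right has_integral_averaging_integrand[OF z]
        has_integral_y1_terms[OF c z])
  then have "((\<lambda>s. (2 * Fc a b lam 2 s (rsol s z)
         + deriv (deriv (\<lambda>\<rho>. Fc a b lam 0 s \<rho>)) (rsol s z) * (y1 a b lam s z)^2
         + 2 * deriv (\<lambda>\<rho>. Fc a b lam 1 s \<rho>) (rsol s z) * y1 a b lam s z) / Ysol s z)
      has_integral 2 * averaged (lam 2) (b 2 4 0) (b 2 2 2 - a 2 3 1) (b 2 0 4 - a 2 1 3) z + 4 * z^7 * 0) {0..2*pi}"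
    by (rule has_integral_eq[rotated]) (subst second_order_integrand_eq[OF c z], auto)
  then show ?thesis unfolding f2_def y2_def Ysol_2pi by (simp add: integral_unique)
qed

section \<open>Counting simple zeros\<close>

lemma zs_props:
  fixes s :: real
  assumes s: "0 < s" "s < 1"
  shows "zs s \<in> Dom" "tz (zs s) = s"
proof -
  have q: "0 < 1 + s^2" by (simp add: add_pos_nonneg)
  have p: "0 < (1 - s^2) / (3 * (1 + s^2))"
    using s q by (intro divide_pos_pos) (auto simp: power_less_one_iff)
  have z3: "(zs s)^3 = (1 - s^2) / (3 * (1 + s^2))" unfolding zs_def using powr_one_third(3)[OF p] .
  have "0 < zs s" unfolding zs_def using powr_one_third(4)[OF p] .
  moreover have "3 * (zs s)^3 < 1" unfolding z3 using s q by (simp add: field_simps)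
  ultimately show "zs s \<in> Dom" by (simp add: mem_Dom_iff)
  have "s^2 \<noteq> 1" using s by (simp add: power_less_one_iff less_imp_neq)
  then have "(1 - 3 * (zs s)^3) / (1 + 3 * (zs s)^3) = s^2" unfolding z3 using q
    by (simp add: field_simps)
  then show "tz (zs s) = s" unfolding tz_def using s by simp
qed

lemma zs_tz:
  assumes "z \<in> Dom"
  shows "zs (tz z) = z"
proof -
  have z: "0 < z" "3*z^3 < 1" using assms by (simp_all add: mem_Dom_iff)
  have "(1 - (tz z)^2) / (3 * (1 + (tz z)^2)) = ((1 - (tz z)^2) / (1 + (tz z)^2)) / 3" by simp
  also have "\<dots> = z^3" unfolding tz_props(3)[OF z, symmetric] by simp
  finally have "(1 - (tz z)^2) / (3 * (1 + (tz z)^2)) = z^3" .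
  moreover have "(z^3) powr (1/3) = z"
  proof -
    have "z^3 = z powr 3" using z by simp
    then have "(z^3) powr (1/3) = z powr (3 * (1/3))" by (simp only: powr_powr)
    then show ?thesis using z by simp
  qed
  ultimately show ?thesis unfolding zs_def by simp
qed

lemma zs_div_eq_powr:
  fixes s :: real
  assumes s: "0 < s" "s < 1"
  shows "zs s / (36 * (1 + s)^4 * (1 + s^2))
       = 3 powr (2/3) * (1 - s) powr (1/3) / (108 * (1 + s) powr (11/3) * (1 + s^2) powr (4/3))"
proof -
  have pos: "0 < 1 - s" "0 < 1 + s" "0 < 1 + s^2" using s by (auto intro: add_pos_nonneg)
  define A B C T where "A = (1 - s) powr (1/3)" and "B = (1 + s) powr (1/3)"
    and "C = (1 + s^2) powr (1/3)" and "T = (3::real) powr (1/3)"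
  have positive: "A > 0" "B > 0" "C > 0" "T > 0"
    unfolding A_def B_def C_def T_def using pos by simp_all
  have cubes: "B^3 = 1 + s" "C^3 = 1 + s^2" "T^3 = 3"
    unfolding B_def C_def T_def using powr_one_third(3) pos by simp_all
  have zs_ABC: "zs s = A * B / (T * C)"
  proof -
    have "(1 - s^2) / (3 * (1 + s^2)) = ((1 - s) * (1 + s)) / (3 * (1 + s^2))"
      by (simp add: algebra_simps power2_eq_square)
    then show ?thesis unfolding zs_def A_def B_def C_def T_def by (simp only: powr_divide powr_mult)
  qed
  have powers: "3 powr (2/3) = T^2" "(1 + s) powr (11/3) = B^11" "(1 + s^2) powr (4/3) = C^4"
    unfolding B_def C_def T_def using pos by (simp_all add: powr_power)
  show ?thesis unfolding zs_ABC powers unfolding A_def[symmetric] cubes(1,2)[symmetric]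
    using positive cubes(3) by (simp add: field_simps) (simp add: power_numeral_reduce algebra_simps)
qed

lemma Hpoly_eq_sextic: "Hpoly a b lam s = sextic (lam 2) (b 2 4 0) (b 2 2 2 - a 2 3 1) (b 2 0 4 - a 2 1 3) s"
  unfolding Hpoly_def sextic_def Let_def by (simp add: algebra_simps)

lemma f2_zs_eq:
  assumes c: "cond2 a b lam" and s: "0 < s" "s < 1"
  shows "f2 a b lam (zs s) = pi * 3 powr (2/3) * (1 - s) powr (1/3)
          / (108 * (1 + s) powr (11/3) * (1 + s^2) powr (4/3)) * Hpoly a b lam s"
proof -
  have "f2 a b lam (zs s) = pi * (zs s / (36 * (1 + s)^4 * (1 + s^2))) * Hpoly a b lam s"
    unfolding f2_eq_averaged[OF c zs_props(1)[OF s]] averaged_def zs_props(2)[OF s] Hpoly_eq_sextic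
    by simp
  then show ?thesis unfolding zs_div_eq_powr[OF s] by simp
qed

lemma simple_zeros_cong:
  assumes "\<And>z. z \<in> Dom \<Longrightarrow> f z = g z"
  shows "simple_zeros f = simple_zeros g"
proof -
  have "open Dom" unfolding Dom_def by simp
  have "(f has_real_derivative d) (at z) \<longleftrightarrow> (g has_real_derivative d) (at z)" if "z \<in> Dom" for z d
    using has_field_derivative_transform_within_open[OF _ \<open>open Dom\<close> that, of f d g]
      has_field_derivative_transform_within_open[OF _ \<open>open Dom\<close> that, of g d f] assms by auto
  then show ?thesis unfolding simple_zeros_def simple_zero_def using assms by auto
qed

lemma averaged_eq_0_iff:
  assumes "z \<in> Dom"
  shows "averaged L B0 B1 B2 z = 0 \<longleftrightarrow> sextic L B0 B1 B2 (tz z) = 0"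
proof -
  have z: "0 < z" "3*z^3 < 1" using assms by (simp_all add: mem_Dom_iff)
  then have "0 < tz z" by (rule tz_props)
  then have "36 * (1 + tz z)^4 * (1 + (tz z)^2) \<noteq> 0" by (simp add: add_nonneg_eq_0_iff)
  then show ?thesis unfolding averaged_def using z by simp
qed

lemma inj_on_add_inverse: "inj_on (\<lambda>t::real. t + 1/t) {0<..<1}"
proof
  fix t1 t2 :: real
  assume t: "t1 \<in> {0<..<1}" "t2 \<in> {0<..<1}" and "t1 + 1/t1 = t2 + 1/t2"
  then have "(t1 - t2) * (t1 * t2 - 1) = 0" by (simp add: field_simps)
  moreover have "t1 * t2 < 1" using t by (simp add: mult_strict_mono'[of t1 1 t2 1, simplified])
  ultimately show "t1 = t2" by simp
qed

lemma averaged_zeros_card_le: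
  assumes "\<not> (\<forall>z\<in>Dom. averaged L B0 B1 B2 z = 0)"
  defines "Z \<equiv> {z \<in> Dom. averaged L B0 B1 B2 z = 0}"
  shows "finite Z \<and> card Z \<le> 3"
proof -
  define q where "q = cubic L B0 B1 B2"
  have "q \<noteq> 0"
    using assms(1) cubic_eq_0_imp_sextic_eq_0 unfolding q_def averaged_def by auto
  define W where "W = (\<lambda>z. tz z + 1 / tz z)"
  have tz_range: "tz z \<in> {0<..<1}" if "z \<in> Dom" for z
    using that tz_props(1,2) by (auto simp: mem_Dom_iff)
  have "inj_on W Z"
  proof
    fix z1 z2 assume "z1 \<in> Z" "z2 \<in> Z" "W z1 = W z2"
    then have "tz z1 = tz z2"
      using inj_on_add_inverse tz_range unfolding Z_def W_def inj_on_def by blast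
    then show "z1 = z2" using zs_tz \<open>z1 \<in> Z\<close> \<open>z2 \<in> Z\<close> unfolding Z_def by (metis (lifting) mem_Collect_eq)
  qed
  moreover have "W ` Z \<subseteq> {x. poly q x = 0}"
  proof
    fix x assume "x \<in> W ` Z"
    then obtain z where z: "z \<in> Dom" "sextic L B0 B1 B2 (tz z) = 0" "x = W z"
      unfolding Z_def using averaged_eq_0_iff by auto
    have "tz z \<noteq> 0" using tz_range[OF z(1)] by simp
    then show "x \<in> {x. poly q x = 0}"
      using z(2,3) sextic_eq_cubic by (simp add: q_def W_def)
  qed
  moreover have "finite {x. poly q x = 0}" "card {x. poly q x = 0} \<le> 3"
    using poly_roots_finite[OF \<open>q \<noteq> 0\<close>] card_poly_roots_bound[OF \<open>q \<noteq> 0\<close>] degree_cubic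
    unfolding q_def by (auto intro: order_trans)
  ultimately show ?thesis
    by (metis card_image card_mono finite_imageD finite_subset order_trans)
qed

lemma at_most_three_simple_zeros:
  assumes f: "\<And>z. z \<in> Dom \<Longrightarrow> f z = averaged L B0 B1 B2 z" and "\<not> (\<forall>z\<in>Dom. f z = 0)"
  shows "finite (simple_zeros f) \<and> card (simple_zeros f) \<le> 3"
proof -
  have "\<not> (\<forall>z\<in>Dom. averaged L B0 B1 B2 z = 0)" using assms by auto
  then have "finite {z \<in> Dom. averaged L B0 B1 B2 z = 0} \<and> card {z \<in> Dom. averaged L B0 B1 B2 z = 0} \<le> 3"
    by (rule averaged_zeros_card_le)
  moreover have "simple_zeros f \<subseteq> {z \<in> Dom. averaged L B0 B1 B2 z = 0}"
    unfolding simple_zeros_def simple_zero_def using f by auto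
  ultimately show ?thesis by (meson card_mono finite_subset order_trans)
qed

lemma has_real_derivative_tz:
  assumes "z \<in> Dom"
  obtains d where "(tz has_real_derivative d) (at z)" "d \<noteq> 0"
proof -
  have z: "0 < z" "3*z^3 < 1" using assms by (simp_all add: mem_Dom_iff)
  have "0 < 1 + 3*z^3" using z by (simp add: add_pos_nonneg)
  then have quotient: "((\<lambda>z. (1 - 3*z^3) / (1 + 3*z^3)) has_real_derivative - 18*z^2 / (1 + 3*z^3)^2) (at z)"
    by (auto intro!: derivative_eq_intros simp: field_simps power2_eq_square power3_eq_cube)
  have pos: "0 < (1 - 3*z^3) / (1 + 3*z^3)" using z \<open>0 < 1 + 3*z^3\<close> by simp
  have "tz = (\<lambda>z. sqrt ((1 - 3*z^3) / (1 + 3*z^3)))" by (rule ext) (simp add: tz_def)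
  then have "(tz has_real_derivative
      inverse (sqrt ((1 - 3*z^3) / (1 + 3*z^3))) / 2 * (- 18*z^2 / (1 + 3*z^3)^2)) (at z)"
    using DERIV_chain2[OF DERIV_real_sqrt[OF pos] quotient] by simp
  moreover have "inverse (sqrt ((1 - 3*z^3) / (1 + 3*z^3))) / 2 * (- 18*z^2 / (1 + 3*z^3)^2) \<noteq> 0"
    using z pos \<open>0 < 1 + 3*z^3\<close> by simp
  ultimately show ?thesis by (rule that)
qed

lemma simple_zero_averagedI:
  assumes "z \<in> Dom" and root: "sextic L B0 B1 B2 (tz z) = 0"
    and N': "(sextic L B0 B1 B2 has_real_derivative N') (at (tz z))" "N' \<noteq> 0"
  shows "simple_zero (averaged L B0 B1 B2) z"
proof -
  obtain T' where T': "(tz has_real_derivative T') (at z)" "T' \<noteq> 0"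
    using has_real_derivative_tz[OF \<open>z \<in> Dom\<close>] .
  define D where "D = (\<lambda>t::real. 36 * (1 + t)^4 * (1 + t^2))"
  have "0 < tz z" "0 < z" using tz_props(1) \<open>z \<in> Dom\<close> by (auto simp: mem_Dom_iff)
  then have "D (tz z) \<noteq> 0" by (simp add: D_def add_nonneg_eq_0_iff)
  define D' where "D' = 36 * (4 * (1 + tz z)^3) * (1 + (tz z)^2) + 36 * (1 + tz z)^4 * (2 * tz z)"
  have "(D has_real_derivative D') (at (tz z))"
    unfolding D_def D'_def by (auto intro!: derivative_eq_intros)
  note D_tz = DERIV_chain2[OF this T'(1)]
  have "((\<lambda>z. pi * z * sextic L B0 B1 B2 (tz z) / D (tz z)) has_real_derivative
      ((pi * sextic L B0 B1 B2 (tz z) + N' * T' * (pi * z)) * D (tz z)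
        - pi * z * sextic L B0 B1 B2 (tz z) * (D' * T')) / (D (tz z) * D (tz z))) (at z)"
    by (intro DERIV_divide DERIV_mult DERIV_chain2[OF N'(1) T'(1)] D_tz \<open>D (tz z) \<noteq> 0\<close>)
       (auto intro!: derivative_eq_intros)
  moreover have "averaged L B0 B1 B2 = (\<lambda>z. pi * z * sextic L B0 B1 B2 (tz z) / D (tz z))"
    unfolding averaged_def[abs_def] D_def ..
  ultimately have "(averaged L B0 B1 B2 has_real_derivative pi * z * N' * T' / D (tz z)) (at z)"
    using \<open>D (tz z) \<noteq> 0\<close> root by (simp add: field_simps)
  moreover have "pi * z * N' * T' / D (tz z) \<noteq> 0"
    using \<open>0 < z\<close> N'(2) T'(2) \<open>D (tz z) \<noteq> 0\<close> by simp
  moreover have "averaged L B0 B1 B2 z = 0" using averaged_eq_0_iff[OF \<open>z \<in> Dom\<close>] root by simp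
  ultimately show ?thesis unfolding simple_zero_def by blast
qed

lemma sextic_example:
  "sextic (-1) (-850) 4998 (-1352) t = 64 * (2*t - 1) * (t - 2) * (3*t - 1) * (t - 3) * (4*t - 1) * (t - 4)"
  unfolding sextic_def Let_def by simp algebra

lemma has_real_derivative_sextic_example:
  "(sextic (-1) (-850) 4998 (-1352) has_real_derivative
     9216*t^5 - 77440*t^4 + 221952*t^3 - 256128*t^2 + 110976*t - 15488) (at t)"
proof -
  have "sextic (-1) (-850) 4998 (-1352) =
      (\<lambda>t. 1536*t^6 - 15488*t^5 + 55488*t^4 - 85376*t^3 + 55488*t^2 - 15488*t + 1536)"
    unfolding sextic_def[abs_def] Let_def by simp
  then show ?thesis by (auto intro!: derivative_eq_intros simp: eval_nat_numeral)
qed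

lemma simple_zeros_averaged_example:
  "simple_zeros (averaged (-1) (-850) 4998 (-1352)) = zs ` {1/2, 1/3, 1/4}"
proof (intro equalityI subsetI)
  fix z assume "z \<in> simple_zeros (averaged (-1) (-850) 4998 (-1352))"
  then have z: "z \<in> Dom" "sextic (-1) (-850) 4998 (-1352) (tz z) = 0"
    unfolding simple_zeros_def simple_zero_def using averaged_eq_0_iff by auto
  have "0 < tz z" "tz z < 1" using tz_props(1,2) z(1) by (auto simp: mem_Dom_iff)
  then have "tz z \<in> {1/2, 1/3, 1/4}" using z(2) unfolding sextic_example by auto
  then show "z \<in> zs ` {1/2, 1/3, 1/4}" using zs_tz[OF z(1)] by (metis image_eqI)
next
  fix z assume "z \<in> zs ` {1/2, 1/3, 1/4::real}"
  then obtain t where t: "t \<in> {1/2, 1/3, 1/4}" and "z = zs t" by blast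
  then have "z \<in> Dom" "tz z = t" using zs_props[of t] by auto
  moreover have "sextic (-1) (-850) 4998 (-1352) t = 0" using t unfolding sextic_example by auto
  moreover have "9216*t^5 - 77440*t^4 + 221952*t^3 - 256128*t^2 + 110976*t - 15488 \<noteq> (0::real)"
  proof -
    have "t = 1/2 \<or> t = 1/3 \<or> t = 1/4" using t by blast
    then show ?thesis by (elim disjE; hypsubst; simp add: power_divide)
  qed
  ultimately show "z \<in> simple_zeros (averaged (-1) (-850) 4998 (-1352))"
    unfolding simple_zeros_def
    using simple_zero_averagedI[OF _ _ has_real_derivative_sextic_example] by auto
qed

lemma three_simple_zeros_example:
  assumes f: "\<And>z. z \<in> Dom \<Longrightarrow> f z = averaged (-1) (-850) 4998 (-1352) z"
  shows "\<not> (\<forall>z\<in>Dom. f z = 0) \<and> finite (simple_zeros f) \<and> card (simple_zeros f) = 3"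
proof (intro conjI)
  have "inj_on zs {1/2, 1/3, 1/4::real}"
    by (rule inj_on_inverseI[where g = tz]) (auto simp: zs_props(2))
  moreover have "simple_zeros f = zs ` {1/2, 1/3, 1/4}"
    using simple_zeros_cong[OF f] simple_zeros_averaged_example by simp
  ultimately show "finite (simple_zeros f)" "card (simple_zeros f) = 3"
    by (simp_all add: card_image)
  have "zs (1/5) \<in> Dom" "tz (zs (1/5)) = 1/5" using zs_props[of "1/5"] by auto
  moreover have "sextic (-1) (-850) 4998 (-1352) (1/5) \<noteq> 0" unfolding sextic_example by simp
  ultimately show "\<not> (\<forall>z\<in>Dom. f z = 0)" using f averaged_eq_0_iff by metis
qed

definition example_b :: "nat \<Rightarrow> nat \<Rightarrow> nat \<Rightarrow> nat \<Rightarrow> real" where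
  "example_b k0 k i j =
    (if k = k0 \<and> (i, j) = (4, 0) then -850 else if k = k0 \<and> (i, j) = (2, 2) then 4998
     else if k = k0 \<and> (i, j) = (0, 4) then -1352 else 0)"

definition example_lam :: "nat \<Rightarrow> nat \<Rightarrow> real" where
  "example_lam k0 k = (if k = k0 then -1 else 0)"

theorem mainTheorem10:
  shows
   "(\<forall>a b lam. \<not> (\<forall>z\<in>Dom. f1 a b lam z = 0) \<longrightarrow>
        finite (simple_zeros (f1 a b lam)) \<and> card (simple_zeros (f1 a b lam)) \<le> 3)
  \<and> (\<exists>a b lam. \<not> (\<forall>z\<in>Dom. f1 a b lam z = 0) \<and>
        finite (simple_zeros (f1 a b lam)) \<and> card (simple_zeros (f1 a b lam)) = 3)
  \<and> (\<forall>a b lam. cond2 a b lam \<longrightarrow> (\<forall>z\<in>Dom. f1 a b lam z = 0))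
  \<and> (\<forall>a b lam. cond2 a b lam \<longrightarrow> (\<forall>s\<in>{0<..<1::real}.
        f2 a b lam (zs s) =
          pi * 3 powr (2/3) * (1 - s) powr (1/3)
          / (108 * (1 + s) powr (11/3) * (1 + s^2) powr (4/3)) * Hpoly a b lam s))
  \<and> (\<forall>a b lam. cond2 a b lam \<and> \<not> (\<forall>z\<in>Dom. f2 a b lam z = 0) \<longrightarrow>
        finite (simple_zeros (f2 a b lam)) \<and> card (simple_zeros (f2 a b lam)) \<le> 3)
  \<and> (\<exists>a b lam. cond2 a b lam \<and> \<not> (\<forall>z\<in>Dom. f2 a b lam z = 0) \<and>
        finite (simple_zeros (f2 a b lam)) \<and> card (simple_zeros (f2 a b lam)) = 3)"
proof (intro conjI)
  show "\<forall>a b lam. \<not> (\<forall>z\<in>Dom. f1 a b lam z = 0) \<longrightarrow>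
      finite (simple_zeros (f1 a b lam)) \<and> card (simple_zeros (f1 a b lam)) \<le> 3"
    using at_most_three_simple_zeros[OF f1_eq_averaged] by blast
  show "\<exists>a b lam. \<not> (\<forall>z\<in>Dom. f1 a b lam z = 0) \<and>
      finite (simple_zeros (f1 a b lam)) \<and> card (simple_zeros (f1 a b lam)) = 3"
    by (intro exI[of _ "\<lambda>k i j. 0"] exI[of _ "example_b 1"] exI[of _ "example_lam 1"] three_simple_zeros_example)
       (simp add: f1_eq_averaged example_b_def example_lam_def)
  show "\<forall>a b lam. cond2 a b lam \<longrightarrow> (\<forall>z\<in>Dom. f1 a b lam z = 0)"
    by (simp add: f1_eq_averaged cond2_def averaged_def sextic_def)
  show "\<forall>a b lam. cond2 a b lam \<longrightarrow> (\<forall>s\<in>{0<..<1::real}. f2 a b lam (zs s) =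
      pi * 3 powr (2/3) * (1 - s) powr (1/3) / (108 * (1 + s) powr (11/3) * (1 + s^2) powr (4/3)) * Hpoly a b lam s)"
    by (simp add: f2_zs_eq)
  show "\<forall>a b lam. cond2 a b lam \<and> \<not> (\<forall>z\<in>Dom. f2 a b lam z = 0) \<longrightarrow>
      finite (simple_zeros (f2 a b lam)) \<and> card (simple_zeros (f2 a b lam)) \<le> 3"
    using at_most_three_simple_zeros[OF f2_eq_averaged] by blast
  have "cond2 (\<lambda>k i j. 0) (example_b 2) (example_lam 2)"
    by (simp add: cond2_def example_b_def example_lam_def)
  then show "\<exists>a b lam. cond2 a b lam \<and> \<not> (\<forall>z\<in>Dom. f2 a b lam z = 0) \<and>
      finite (simple_zeros (f2 a b lam)) \<and> card (simple_zeros (f2 a b lam)) = 3"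
    by (intro exI[of _ "\<lambda>k i j. 0"] exI[of _ "example_b 2"] exI[of _ "example_lam 2"] conjI
        three_simple_zeros_example) (simp_all add: f2_eq_averaged example_b_def example_lam_def)
qed

end
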